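(* Let $(S,U,A,\{R(a)\}_{a\in\mathcal{A}})$ be a random tuple, where $S\in\mathcal{S}$ is an observed feature, $U\in\mathcal{U}$ is an unobserved feature, $A$ is an action taking values in a finite set $\mathcal{A}$, and $R(a)$ (integrable) is the potential reward had action $a$ been taken; the observed reward is $R=\sum_{a\in\mathcal{A}}R(a)\mathbb{I}(A=a)$. Suppose $A$ is generated by a behavior policy $\pi^b(\cdot\mid S,U)$ that may depend on both $S$ and $U$. Let $\pi^\ast$ be the standard optimal policy, $\pi^\ast(a^\ast\mid s)=1$ where $a^\ast=\operatorname{argmax}_{a\in\mathcal{A}}\mathbb{E}[R(a)\mid S=s]$ (assumed unique for every $s$), and let $\nu^\ast$ be the super-policy, $\nu^\ast(a^\ast\mid s,a')=1$ where $a^\ast=\operatorname{argmax}_{a\in\mathcal{A}}\mathbb{E}[R(a)\mid S=s,A=a']$, for all $(s,a')\in\mathcal{S}\times\mathcal{A}$. Then $$\mathcal{V}(\nu^\ast)\ \ge\ \max\{\mathcal{V}(\pi^b),\mathcal{V}(\pi^\ast)\}.$$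
   Context: The super-policy class is $\Omega=\{\nu:\mathcal{S}\times\mathcal{A}\to\mathcal{P}(\mathcal{A})\}$, where $\mathcal{P}(\mathcal{A})$ is the set of probability distributions on $\mathcal{A}$ and the second argument of $\nu$ is the action $A$ recommended by the behavior policy. For $\nu\in\Omega$, its value is $\mathcal{V}(\nu)=\sum_{a\in\mathcal{A}}\mathbb{E}[R(a)\nu(a\mid S,A)]$. For a policy $\pi:\mathcal{S}\to\mathcal{P}(\mathcal{A})$, $\mathcal{V}(\pi)=\sum_{a}\mathbb{E}[R(a)\pi(a\mid S)]$. The value of the behavior policy is $\mathcal{V}(\pi^b)=\mathbb{E}[R]=\sum_a\mathbb{E}[R(a)\mathbb{I}(A=a)]$. *)

theory Defs
  imports "HOL-Probability.Probability"
begin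

definition argmax_act :: "('a::finite \<Rightarrow> real) \<Rightarrow> 'a" where
  "argmax_act f = (THE a. \<forall>b. f b \<le> f a)"

text \<open>Value of a super-policy nu, where nu s a' a is the probability of action a
  given feature s and recommended (behaviour) action a':
  V(nu) = sum_a E[R(a) nu(a | S, A)].\<close>
definition super_value ::
  "'w measure \<Rightarrow> ('w \<Rightarrow> 's) \<Rightarrow> ('w \<Rightarrow> 'a::finite) \<Rightarrow> ('a \<Rightarrow> 'w \<Rightarrow> real)
     \<Rightarrow> ('s \<Rightarrow> 'a \<Rightarrow> 'a \<Rightarrow> real) \<Rightarrow> real" where
  "super_value M S A R nu = (\<Sum>a\<in>UNIV. \<integral>w. R a w * nu (S w) (A w) a \<partial>M)"

definition policy_value ::
  "'w measure \<Rightarrow> ('w \<Rightarrow> 's) \<Rightarrow> ('a::finite \<Rightarrow> 'w \<Rightarrow> real)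
     \<Rightarrow> ('s \<Rightarrow> 'a \<Rightarrow> real) \<Rightarrow> real" where
  "policy_value M S R p = (\<Sum>a\<in>UNIV. \<integral>w. R a w * p (S w) a \<partial>M)"

definition behavior_value ::
  "'w measure \<Rightarrow> ('w \<Rightarrow> 'a::finite) \<Rightarrow> ('a \<Rightarrow> 'w \<Rightarrow> real) \<Rightarrow> real" where
  "behavior_value M A R = (\<Sum>a\<in>UNIV. \<integral>w. R a w * indicator {a} (A w) \<partial>M)"

text \<open>Standard optimal policy from Q1 s a = E[R(a) | S = s].\<close>
definition pi_star :: "('s \<Rightarrow> 'a::finite \<Rightarrow> real) \<Rightarrow> 's \<Rightarrow> 'a \<Rightarrow> real" where
  "pi_star Q1 s a = (if a = argmax_act (Q1 s) then 1 else 0)"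

text \<open>Optimal super-policy from Q2 (s,a') a = E[R(a) | S = s, A = a'].\<close>
definition nu_star :: "('s \<times> 'a \<Rightarrow> 'a::finite \<Rightarrow> real) \<Rightarrow> 's \<Rightarrow> 'a \<Rightarrow> 'a \<Rightarrow> real" where
  "nu_star Q2 s a' a = (if a = argmax_act (Q2 (s, a')) then 1 else 0)"

end

theory Submission
  imports Defs
begin

text \<open>Let Q2 (S, A) a be a version of E[R(a) | S, A]. For every action rule h that
  depends measurably on (S, A), the tower property gives
  sum_a E[R(a) I(h(S, A) = a)] = E[Q2 (S, A) (h (S, A))], which is maximised pointwise by
  choosing h(S, A) = argmax_a Q2 (S, A) a, i.e. by nu*. The behaviour policy is the rule
  h(S, A) = A and pi* is the rule h(S, A) = argmax_a Q1 S a; so only the measurability of Q1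
  is needed, not that it is a conditional expectation.\<close>

lemma argmax_act_max:
  assumes "\<exists>!a. \<forall>b. f b \<le> f a"
  shows "f b \<le> f (argmax_act f)"
  using theI'[OF assms] unfolding argmax_act_def by blast

lemma argmax_act_eq_iff:
  assumes "\<exists>!a. \<forall>b. f b \<le> f a"
  shows "argmax_act f = a \<longleftrightarrow> (\<forall>b. f b \<le> f a)"
  using argmax_act_max[OF assms] assms by metis

lemma measurable_argmax_act:
  fixes F :: "'x \<Rightarrow> 'a::finite \<Rightarrow> real"
  assumes meas: "\<And>a. (\<lambda>x. F x a) \<in> borel_measurable N"
    and uniq: "\<And>x. \<exists>!a. \<forall>b. F x b \<le> F x a"
  shows "(\<lambda>x. argmax_act (F x)) \<in> measurable N (count_space UNIV)"
proof (subst measurable_count_space_eq2_countable, intro conjI ballI)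
  fix a :: 'a
  have "(\<lambda>x. argmax_act (F x)) -` {a} \<inter> space N = (\<Inter>b. {x \<in> space N. F x b \<le> F x a})"
    using argmax_act_eq_iff[OF uniq] by auto
  also have "\<dots> \<in> sets N"
    by (intro sets.finite_INT) (auto intro!: borel_measurable_le meas)
  finally show "(\<lambda>x. argmax_act (F x)) -` {a} \<inter> space N \<in> sets N" .
qed auto

locale reward_cond_exp =
  fixes M :: "'w measure" and N :: "'x measure" and X :: "'w \<Rightarrow> 'x"
    and R :: "'a::finite \<Rightarrow> 'w \<Rightarrow> real" and Q :: "'x \<Rightarrow> 'a \<Rightarrow> real"
  assumes X_meas: "X \<in> measurable M N"
    and Q_int: "\<And>a. integrable M (\<lambda>w. Q (X w) a)"
    and Q_ce: "\<And>a B. B \<in> sets N \<Longrightarrow>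
        (\<integral>w. indicator B (X w) * R a w \<partial>M) = (\<integral>w. indicator B (X w) * Q (X w) a \<partial>M)"
begin

lemma integrable_indicator_mult_Q:
  assumes "B \<in> sets N"
  shows "integrable M (\<lambda>w. indicator B (X w) * Q (X w) a)"
proof -
  have "integrable M (\<lambda>w. Q (X w) a * indicator (X -` B \<inter> space M) w)"
    using X_meas assms Q_int by (intro integrable_real_mult_indicator) auto
  then show ?thesis
    by (rule Bochner_Integration.integrable_cong[OF refl, THEN iffD1, rotated])
      (auto simp: indicator_def)
qed

context
  fixes h :: "'x \<Rightarrow> 'a"
  assumes h_meas: "h \<in> measurable N (count_space UNIV)"
begin

definition level_set :: "'a \<Rightarrow> 'x set" where
  "level_set a = h -` {a} \<inter> space N"

lemma level_set_sets: "level_set a \<in> sets N"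
  unfolding level_set_def using h_meas by (rule measurable_sets) simp

lemma indicator_level_set:
  "w \<in> space M \<Longrightarrow> indicator (level_set a) (X w) = (indicator {a} (h (X w)) :: real)"
  using measurable_space[OF X_meas] by (auto simp: level_set_def indicator_def)

lemma Q_rule_eq_sum_level_set:
  "w \<in> space M \<Longrightarrow> Q (X w) (h (X w)) = (\<Sum>a\<in>UNIV. indicator (level_set a) (X w) * Q (X w) a)"
  by (simp only: indicator_level_set) (simp add: indicator_def)

lemma integrable_Q_rule: "integrable M (\<lambda>w. Q (X w) (h (X w)))"
proof -
  have "integrable M (\<lambda>w. \<Sum>a\<in>UNIV. indicator (level_set a) (X w) * Q (X w) a)"
    by (intro Bochner_Integration.integrable_sum integrable_indicator_mult_Q level_set_sets)
  then show ?thesis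
    by (rule Bochner_Integration.integrable_cong[OF refl, THEN iffD1, rotated])
      (simp add: Q_rule_eq_sum_level_set)
qed

lemma rule_value_eq:
  "(\<Sum>a\<in>UNIV. \<integral>w. R a w * indicator {a} (h (X w)) \<partial>M) = (\<integral>w. Q (X w) (h (X w)) \<partial>M)"
proof -
  have "(\<Sum>a\<in>UNIV. \<integral>w. R a w * indicator {a} (h (X w)) \<partial>M)
      = (\<Sum>a\<in>UNIV. \<integral>w. indicator (level_set a) (X w) * R a w \<partial>M)"
    by (intro sum.cong refl Bochner_Integration.integral_cong) (simp add: indicator_level_set)
  also have "\<dots> = (\<Sum>a\<in>UNIV. \<integral>w. indicator (level_set a) (X w) * Q (X w) a \<partial>M)"
    by (intro sum.cong refl Q_ce level_set_sets)
  also have "\<dots> = (\<integral>w. (\<Sum>a\<in>UNIV. indicator (level_set a) (X w) * Q (X w) a) \<partial>M)"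
    by (intro Bochner_Integration.integral_sum[symmetric] integrable_indicator_mult_Q level_set_sets)
  also have "\<dots> = (\<integral>w. Q (X w) (h (X w)) \<partial>M)"
    by (intro Bochner_Integration.integral_cong refl) (simp add: Q_rule_eq_sum_level_set)
  finally show ?thesis .
qed

end

lemma rule_value_le_argmax:
  assumes h_meas: "h \<in> measurable N (count_space UNIV)"
    and Q_meas: "\<And>a. (\<lambda>x. Q x a) \<in> borel_measurable N"
    and Q_uniq: "\<And>x. \<exists>!a. \<forall>b. Q x b \<le> Q x a"
  shows "(\<Sum>a\<in>UNIV. \<integral>w. R a w * indicator {a} (h (X w)) \<partial>M)
       \<le> (\<Sum>a\<in>UNIV. \<integral>w. R a w * indicator {a} (argmax_act (Q (X w))) \<partial>M)"
proof -
  have g_meas: "(\<lambda>x. argmax_act (Q x)) \<in> measurable N (count_space UNIV)"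
    using Q_meas Q_uniq by (rule measurable_argmax_act)
  have "(\<integral>w. Q (X w) (h (X w)) \<partial>M) \<le> (\<integral>w. Q (X w) (argmax_act (Q (X w))) \<partial>M)"
    using integrable_Q_rule[OF h_meas] integrable_Q_rule[OF g_meas]
    by (intro integral_mono) (auto intro: argmax_act_max[OF Q_uniq])
  then show ?thesis
    using rule_value_eq[OF h_meas] rule_value_eq[OF g_meas] by simp
qed

end

theorem lemma1:
  fixes M :: "'w measure" and MS :: "'s measure" and MU :: "'u measure"
    and S :: "'w \<Rightarrow> 's" and U :: "'w \<Rightarrow> 'u" and A :: "'w \<Rightarrow> 'a::finite"
    and R :: "'a \<Rightarrow> 'w \<Rightarrow> real"
    and Q1 :: "'s \<Rightarrow> 'a \<Rightarrow> real" and Q2 :: "'s \<times> 'a \<Rightarrow> 'a \<Rightarrow> real"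
  assumes "prob_space M"
    and S_meas: "S \<in> measurable M MS"
    and U_meas: "U \<in> measurable M MU"
    and A_meas: "A \<in> measurable M (count_space UNIV)"
    and R_int: "\<And>a. integrable M (R a)"
    \<comment> \<open>Q1 (S w) a is (a version of) E[R(a) | S]\<close>
    and Q1_meas: "\<And>a. (\<lambda>s. Q1 s a) \<in> borel_measurable MS"
    and Q1_int: "\<And>a. integrable M (\<lambda>w. Q1 (S w) a)"
    and Q1_ce: "\<And>a B. B \<in> sets MS \<Longrightarrow>
        (\<integral>w. indicator B (S w) * R a w \<partial>M) = (\<integral>w. indicator B (S w) * Q1 (S w) a \<partial>M)"
    \<comment> \<open>Q2 (S w, A w) a is (a version of) E[R(a) | S, A]\<close>
    and Q2_meas: "\<And>a. (\<lambda>x. Q2 x a) \<in> borel_measurable (MS \<Otimes>\<^sub>M count_space UNIV)"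
    and Q2_int: "\<And>a. integrable M (\<lambda>w. Q2 (S w, A w) a)"
    and Q2_ce: "\<And>a B. B \<in> sets (MS \<Otimes>\<^sub>M count_space UNIV) \<Longrightarrow>
        (\<integral>w. indicator B (S w, A w) * R a w \<partial>M)
          = (\<integral>w. indicator B (S w, A w) * Q2 (S w, A w) a \<partial>M)"
    \<comment> \<open>uniqueness of the argmax\<close>
    and Q1_uniq: "\<And>s. \<exists>!a. \<forall>b. Q1 s b \<le> Q1 s a"
    and Q2_uniq: "\<And>s a'. \<exists>!a. \<forall>b. Q2 (s, a') b \<le> Q2 (s, a') a"
  shows "super_value M S A R (nu_star Q2)
           \<ge> max (behavior_value M A R) (policy_value M S R (pi_star Q1))"
proof -
  let ?N = "MS \<Otimes>\<^sub>M count_space UNIV"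
  interpret reward_cond_exp M ?N "\<lambda>w. (S w, A w)" R Q2
    using measurable_Pair[OF S_meas A_meas] Q2_int Q2_ce by unfold_locales
  have Q2_uniq': "\<exists>!a. \<forall>b. Q2 x b \<le> Q2 x a" for x
    using Q2_uniq[of "fst x" "snd x"] by simp
  have pi_star_meas: "(\<lambda>x. argmax_act (Q1 (fst x))) \<in> measurable ?N (count_space UNIV)"
    using measurable_argmax_act[OF Q1_meas Q1_uniq] by measurable
  have "behavior_value M A R \<le> super_value M S A R (nu_star Q2)"
    using rule_value_le_argmax[OF measurable_snd Q2_meas Q2_uniq']
    by (simp add: behavior_value_def super_value_def nu_star_def indicator_def of_bool_def eq_commute)
  moreover have "policy_value M S R (pi_star Q1) \<le> super_value M S A R (nu_star Q2)"
    using rule_value_le_argmax[OF pi_star_meas Q2_meas Q2_uniq']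
    by (simp add: policy_value_def pi_star_def super_value_def nu_star_def indicator_def of_bool_def eq_commute)
  ultimately show ?thesis by simp
qed

end
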